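(* Assume Assumptions 1, 2 and 3 and $0<P(Z=1\mid R=r)<1$, $P(R=r)>0$ for $r=1,2$. Write $\omega_{ys\mid zr}=P(Y=y,S=s\mid Z=z,R=r)$ and $\delta_{zu}=P(Y=1\mid Z=z,U=u)$. Then $\pi_{\bar{s}\bar{s},r}=P(S=0\mid Z=1,R=r)$, $\pi_{ss,r}=P(S=1\mid Z=0,R=r)$ and $\pi_{s\bar{s},r}=1-\pi_{ss,r}-\pi_{\bar{s}\bar{s},r}$. If $\pi_{ss,1}\pi_{s\bar{s},2}-\pi_{ss,2}\pi_{s\bar{s},1}\neq 0$, then $$\delta_{1,ss}=\frac{\omega_{11\mid 11}\pi_{s\bar{s},2}-\omega_{11\mid 12}\pi_{s\bar{s},1}}{\pi_{ss,1}\pi_{s\bar{s},2}-\pi_{ss,2}\pi_{s\bar{s},1}},\qquad \delta_{1,s\bar{s}}=\frac{\omega_{11\mid 12}\pi_{ss,1}-\omega_{11\mid 11}\pi_{ss,2}}{\pi_{ss,1}\pi_{s\bar{s},2}-\pi_{ss,2}\pi_{s\bar{s},1}}.$$ If $\pi_{s\bar{s},1}\pi_{\bar{s}\bar{s},2}-\pi_{s\bar{s},2}\pi_{\bar{s}\bar{s},1}\neq 0$, then $$\delta_{0,s\bar{s}}=\frac{\omega_{10\mid 01}\pi_{\bar{s}\bar{s},2}-\omega_{10\mid 02}\pi_{\bar{s}\bar{s},1}}{\pi_{s\bar{s},1}\pi_{\bar{s}\bar{s},2}-\pi_{s\bar{s},2}\pi_{\bar{s}\bar{s},1}},\qquad \delta_{0,\bar{s}\bar{s}}=\frac{\omega_{10\mid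 02}\pi_{s\bar{s},1}-\omega_{10\mid 01}\pi_{s\bar{s},2}}{\pi_{s\bar{s},1}\pi_{\bar{s}\bar{s},2}-\pi_{s\bar{s},2}\pi_{\bar{s}\bar{s},1}}.$$ (Here $\delta_{1,ss},\delta_{1,s\bar{s}}$, resp. $\delta_{0,s\bar{s}},\delta_{0,\bar{s}\bar{s}}$, are assumed defined, i.e. the corresponding strata have positive probability.)
   Context: Setting: $N_R=2$ trials. A unit is described by $(R,Z,S(1),S(0),Y(1),Y(0))$ with $R\in\{1,2\}$ the trial, $Z\in\{0,1\}$ the treatment, $S(z),Y(z)\in\{0,1\}$ potential surrogate and endpoint. Observed $S=ZS(1)+(1-Z)S(0)$, $Y=ZY(1)+(1-Z)Y(0)$. $U=(S(1),S(0))$ with values $(1,1),(1,0),(0,1),(0,0)$ labeled $ss,s\bar{s},\bar{s}s,\bar{s}\bar{s}$; $\pi_{ur}=P(U=u\mid R=r)$. Assumption 1 (randomization): $Z\perp\!\!\!\perp\{S(1),S(0),Y(1),Y(0)\}\mid R$. Assumption 2 (monotonicity): $S(1)\ge S(0)$ almost surely. Assumption 3 (homogeneity): $R\perp\!\!\!\perp Y(z)\mid U$ for $z=0,1$; under Assumptions 1 and 3, $P(Y=1\mid Z=z,U=u,R=r)=P(Y=1\mid Z=z,U=u)$. *)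

theory Defs
  imports "HOL-Probability.Probability"
begin

text \<open>A unit is a tuple (R, Z, S(1), S(0), Y(1), Y(0)); binary quantities are booleans
  (True = 1, False = 0). The population is a discrete distribution (pmf) on such tuples.\<close>

type_synonym unit_t = "nat \<times> bool \<times> bool \<times> bool \<times> bool \<times> bool"

definition uR :: "unit_t \<Rightarrow> nat" where "uR x = fst x"
definition uZ :: "unit_t \<Rightarrow> bool" where "uZ x = fst (snd x)"
definition uS1 :: "unit_t \<Rightarrow> bool" where "uS1 x = fst (snd (snd x))"
definition uS0 :: "unit_t \<Rightarrow> bool" where "uS0 x = fst (snd (snd (snd x)))"
definition uY1 :: "unit_t \<Rightarrow> bool" where "uY1 x = fst (snd (snd (snd (snd x))))"
definition uY0 :: "unit_t \<Rightarrow> bool" where "uY0 x = snd (snd (snd (snd (snd x))))"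

definition uSz :: "bool \<Rightarrow> unit_t \<Rightarrow> bool" where "uSz z x = (if z then uS1 x else uS0 x)"
definition uYz :: "bool \<Rightarrow> unit_t \<Rightarrow> bool" where "uYz z x = (if z then uY1 x else uY0 x)"

definition obsS :: "unit_t \<Rightarrow> bool" where "obsS x = uSz (uZ x) x"
definition obsY :: "unit_t \<Rightarrow> bool" where "obsY x = uYz (uZ x) x"

text \<open>Principal stratum U = (S(1), S(0)): ss = (True,True), s-sbar = (True,False),
  sbar-s = (False,True), sbar-sbar = (False,False).\<close>
definition uU :: "unit_t \<Rightarrow> bool \<times> bool" where "uU x = (uS1 x, uS0 x)"

definition Pr :: "unit_t pmf \<Rightarrow> (unit_t \<Rightarrow> bool) \<Rightarrow> real" where
  "Pr p A = measure_pmf.prob p {x. A x}"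

definition cPr :: "unit_t pmf \<Rightarrow> (unit_t \<Rightarrow> bool) \<Rightarrow> (unit_t \<Rightarrow> bool) \<Rightarrow> real" where
  "cPr p A B = Pr p (\<lambda>x. A x \<and> B x) / Pr p B"

definition piU :: "unit_t pmf \<Rightarrow> bool \<times> bool \<Rightarrow> nat \<Rightarrow> real" where
  "piU p u r = cPr p (\<lambda>x. uU x = u) (\<lambda>x. uR x = r)"

definition omega :: "unit_t pmf \<Rightarrow> bool \<Rightarrow> bool \<Rightarrow> bool \<Rightarrow> nat \<Rightarrow> real" where
  "omega p y s z r = cPr p (\<lambda>x. obsY x = y \<and> obsS x = s) (\<lambda>x. uZ x = z \<and> uR x = r)"

definition delta :: "unit_t pmf \<Rightarrow> bool \<Rightarrow> bool \<times> bool \<Rightarrow> real" where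
  "delta p z u = cPr p (\<lambda>x. obsY x) (\<lambda>x. uZ x = z \<and> uU x = u)"

text \<open>Assumption 1 (randomization): Z independent of (S(1),S(0),Y(1),Y(0)) given R.\<close>
definition randomization :: "unit_t pmf \<Rightarrow> bool" where
  "randomization p \<longleftrightarrow> (\<forall>r z w.
     Pr p (\<lambda>x. uZ x = z \<and> (uS1 x, uS0 x, uY1 x, uY0 x) = w \<and> uR x = r) * Pr p (\<lambda>x. uR x = r)
     = Pr p (\<lambda>x. uZ x = z \<and> uR x = r) * Pr p (\<lambda>x. (uS1 x, uS0 x, uY1 x, uY0 x) = w \<and> uR x = r))"

definition monotonicity :: "unit_t pmf \<Rightarrow> bool" where
  "monotonicity p \<longleftrightarrow> (AE x in measure_pmf p. uS0 x \<longrightarrow> uS1 x)"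

text \<open>Assumption 3 (homogeneity): R independent of Y(z) given U, for z = 0, 1.\<close>
definition homogeneity :: "unit_t pmf \<Rightarrow> bool" where
  "homogeneity p \<longleftrightarrow> (\<forall>z r y u.
     Pr p (\<lambda>x. uR x = r \<and> uYz z x = y \<and> uU x = u) * Pr p (\<lambda>x. uU x = u)
     = Pr p (\<lambda>x. uR x = r \<and> uU x = u) * Pr p (\<lambda>x. uYz z x = y \<and> uU x = u))"

end

theory Submission imports Defs begin

text \<open>Under randomization and monotonicity the strata proportions can be read off the observed
  surrogate: in the treated arm S = 0 only for the stratum (0,0), in the control arm S = 1 only for
  the stratum (1,1). Homogeneity makes P(Y(z) = 1 | U = u) the same in both trials, so in arm z the
  observed probability of (Y, S) = (1, z) in trial r is a mixture of the two strata with S(z) = z,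
  weighted by their proportions in trial r. The two trials thus give a 2x2 linear system for the two
  response probabilities, which Cramer's rule solves when its determinant is non-zero.\<close>

lemma Pr_cong: "(\<And>x. A x = B x) \<Longrightarrow> Pr p A = Pr p B"
  by (rule arg_cong[where f = "Pr p"], rule ext)

lemma Pr_AE_cong: "AE x in measure_pmf p. A x = B x \<Longrightarrow> Pr p A = Pr p B"
  unfolding Pr_def by (rule measure_pmf.finite_measure_eq_AE) auto

lemma Pr_conj_le: "Pr p (\<lambda>x. A x \<and> B x) \<le> Pr p B"
  unfolding Pr_def by (rule measure_pmf.finite_measure_mono) auto

lemma Pr_split_conj: "Pr p A = Pr p (\<lambda>x. A x \<and> B x) + Pr p (\<lambda>x. A x \<and> \<not> B x)"
proof -
  have "{x. A x} = {x. A x \<and> B x} \<union> {x. A x \<and> \<not> B x}" by auto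
  thus ?thesis unfolding Pr_def by (simp add: measure_pmf.finite_measure_Union disjoint_iff)
qed

lemma Pr_sum_finite_values:
  "finite W \<Longrightarrow> Pr p (\<lambda>x. g x \<in> W \<and> B x) = (\<Sum>w\<in>W. Pr p (\<lambda>x. g x = w \<and> B x))"
proof (induction W rule: finite_induct)
  case empty
  then show ?case by (simp add: Pr_def)
next
  case (insert w W)
  have "Pr p (\<lambda>x. g x \<in> insert w W \<and> B x) = Pr p (\<lambda>x. (g x \<in> insert w W \<and> B x) \<and> g x = w)
      + Pr p (\<lambda>x. (g x \<in> insert w W \<and> B x) \<and> g x \<noteq> w)"
    by (rule Pr_split_conj)
  also have "Pr p (\<lambda>x. (g x \<in> insert w W \<and> B x) \<and> g x = w) = Pr p (\<lambda>x. g x = w \<and> B x)"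
    by (rule Pr_cong) auto
  also have "Pr p (\<lambda>x. (g x \<in> insert w W \<and> B x) \<and> g x \<noteq> w) = Pr p (\<lambda>x. g x \<in> W \<and> B x)"
    using insert by (intro Pr_cong) auto
  finally show ?case using insert by simp
qed

lemma Pr_split_trials:
  assumes "AE x in measure_pmf p. uR x \<in> {1, 2}"
  shows "Pr p A = Pr p (\<lambda>x. A x \<and> uR x = 1) + Pr p (\<lambda>x. A x \<and> uR x = 2)"
proof -
  have "Pr p A = Pr p (\<lambda>x. uR x \<in> {1, 2} \<and> A x)"
    by (rule Pr_AE_cong) (use assms in \<open>auto\<close>)
  also have "\<dots> = Pr p (\<lambda>x. uR x = 1 \<and> A x) + Pr p (\<lambda>x. uR x = 2 \<and> A x)"
    by (subst Pr_sum_finite_values) simp_all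
  finally show ?thesis by (simp add: conj_commute)
qed

lemma treatment_arm_pos:
  assumes pR: "Pr p (\<lambda>x. uR x = r) > 0"
    and pZ: "0 < cPr p uZ (\<lambda>x. uR x = r)" "cPr p uZ (\<lambda>x. uR x = r) < 1"
  shows "Pr p (\<lambda>x. uZ x = z \<and> uR x = r) > 0"
proof -
  have "Pr p (\<lambda>x. uR x = r) = Pr p (\<lambda>x. uR x = r \<and> uZ x) + Pr p (\<lambda>x. uR x = r \<and> \<not> uZ x)"
    by (rule Pr_split_conj)
  moreover have "0 < Pr p (\<lambda>x. uR x = r \<and> uZ x)" "Pr p (\<lambda>x. uR x = r \<and> uZ x) < Pr p (\<lambda>x. uR x = r)"
    using pZ pR unfolding cPr_def by (simp_all add: zero_less_divide_iff divide_less_eq conj_commute)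
  ultimately show ?thesis by (cases z) (simp_all add: conj_commute)
qed

lemma randomization_Pr_mult:
  assumes A1: "randomization p"
    and hA: "\<And>x. A x = (uZ x = z \<and> f (uS1 x, uS0 x, uY1 x, uY0 x) \<and> uR x = r)"
    and hC: "\<And>x. C x = (f (uS1 x, uS0 x, uY1 x, uY0 x) \<and> uR x = r)"
  shows "Pr p A * Pr p (\<lambda>x. uR x = r) = Pr p (\<lambda>x. uZ x = z \<and> uR x = r) * Pr p C"
proof -
  let ?T = "\<lambda>x. (uS1 x, uS0 x, uY1 x, uY0 x)"
  let ?W = "{w. f w}"
  have "Pr p A = Pr p (\<lambda>x. ?T x \<in> ?W \<and> (uZ x = z \<and> uR x = r))"
    using hA by (intro Pr_cong) auto
  also have "\<dots> = (\<Sum>w\<in>?W. Pr p (\<lambda>x. uZ x = z \<and> ?T x = w \<and> uR x = r))"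
    by (subst Pr_sum_finite_values) (auto intro!: sum.cong Pr_cong)
  finally have A: "Pr p A = (\<Sum>w\<in>?W. Pr p (\<lambda>x. uZ x = z \<and> ?T x = w \<and> uR x = r))" .
  have "Pr p C = Pr p (\<lambda>x. ?T x \<in> ?W \<and> uR x = r)"
    using hC by (intro Pr_cong) auto
  also have "\<dots> = (\<Sum>w\<in>?W. Pr p (\<lambda>x. ?T x = w \<and> uR x = r))"
    by (rule Pr_sum_finite_values) simp
  finally have C: "Pr p C = (\<Sum>w\<in>?W. Pr p (\<lambda>x. ?T x = w \<and> uR x = r))" .
  show ?thesis unfolding A C sum_distrib_left sum_distrib_right
    using A1 unfolding randomization_def by (intro sum.cong refl) blast
qed

lemma randomization_cond_arm:
  assumes A1: "randomization p"
    and pZ: "Pr p (\<lambda>x. uZ x = z \<and> uR x = r) > 0" and pR: "Pr p (\<lambda>x. uR x = r) > 0"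
    and hA: "\<And>x. A x = (uZ x = z \<and> f (uS1 x, uS0 x, uY1 x, uY0 x) \<and> uR x = r)"
    and hB: "\<And>x. B x = (uZ x = z \<and> uR x = r)"
    and hC: "\<And>x. C x = (f (uS1 x, uS0 x, uY1 x, uY0 x) \<and> uR x = r)"
  shows "Pr p A / Pr p B = Pr p C / Pr p (\<lambda>x. uR x = r)"
proof -
  have "Pr p B = Pr p (\<lambda>x. uZ x = z \<and> uR x = r)" using hB by (rule Pr_cong)
  with randomization_Pr_mult[OF A1 hA hC] pZ pR show ?thesis by (simp add: field_simps)
qed

lemma Pr_strata_partition:
  assumes "monotonicity p"
  shows "Pr p B = Pr p (\<lambda>x. uU x = (True, True) \<and> B x) + Pr p (\<lambda>x. uU x = (True, False) \<and> B x)
      + Pr p (\<lambda>x. uU x = (False, False) \<and> B x)"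
proof -
  have "Pr p B = Pr p (\<lambda>x. uU x \<in> {(True, True), (True, False), (False, False)} \<and> B x)"
    by (rule Pr_AE_cong) (use assms in \<open>auto simp: monotonicity_def uU_def\<close>)
  also have "\<dots> = Pr p (\<lambda>x. uU x = (True, True) \<and> B x) + Pr p (\<lambda>x. uU x = (True, False) \<and> B x)
      + Pr p (\<lambda>x. uU x = (False, False) \<and> B x)"
    by (subst Pr_sum_finite_values) (simp_all add: add.assoc)
  finally show ?thesis .
qed

lemma piU_strata_sum:
  assumes "monotonicity p" and "Pr p (\<lambda>x. uR x = r) > 0"
  shows "piU p (True, True) r + piU p (True, False) r + piU p (False, False) r = 1"
  using Pr_strata_partition[OF assms(1), of "\<lambda>x. uR x = r"] assms(2)
  unfolding piU_def cPr_def by (simp add: add_divide_distrib[symmetric])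

lemma piU_never_eq_treated_nonresponse:
  assumes A1: "randomization p" and A2: "monotonicity p"
    and pR: "Pr p (\<lambda>x. uR x = r) > 0" and pZ: "Pr p (\<lambda>x. uZ x = True \<and> uR x = r) > 0"
  shows "piU p (False, False) r = cPr p (\<lambda>x. \<not> obsS x) (\<lambda>x. uZ x \<and> uR x = r)"
proof -
  have "cPr p (\<lambda>x. \<not> obsS x) (\<lambda>x. uZ x \<and> uR x = r)
      = Pr p (\<lambda>x. \<not> uS1 x \<and> uR x = r) / Pr p (\<lambda>x. uR x = r)"
    unfolding cPr_def
    by (rule randomization_cond_arm[OF A1 pZ pR, where f = "\<lambda>(s1, s0, y1, y0). \<not> s1"])
      (auto simp: obsS_def uSz_def)
  also have "Pr p (\<lambda>x. \<not> uS1 x \<and> uR x = r) = Pr p (\<lambda>x. uU x = (False, False) \<and> uR x = r)"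
    by (rule Pr_AE_cong) (use A2 in \<open>auto simp: monotonicity_def uU_def\<close>)
  finally show ?thesis unfolding piU_def cPr_def ..
qed

lemma piU_always_eq_control_response:
  assumes A1: "randomization p" and A2: "monotonicity p"
    and pR: "Pr p (\<lambda>x. uR x = r) > 0" and pZ: "Pr p (\<lambda>x. uZ x = False \<and> uR x = r) > 0"
  shows "piU p (True, True) r = cPr p obsS (\<lambda>x. \<not> uZ x \<and> uR x = r)"
proof -
  have "cPr p obsS (\<lambda>x. \<not> uZ x \<and> uR x = r) = Pr p (\<lambda>x. uS0 x \<and> uR x = r) / Pr p (\<lambda>x. uR x = r)"
    unfolding cPr_def
    by (rule randomization_cond_arm[OF A1 pZ pR, where f = "\<lambda>(s1, s0, y1, y0). s0"])
      (auto simp: obsS_def uSz_def)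
  also have "Pr p (\<lambda>x. uS0 x \<and> uR x = r) = Pr p (\<lambda>x. uU x = (True, True) \<and> uR x = r)"
    by (rule Pr_AE_cong) (use A2 in \<open>auto simp: monotonicity_def uU_def\<close>)
  finally show ?thesis unfolding piU_def cPr_def ..
qed

text \<open>P(Y(z) = 1 | U = u), with the potential rather than the observed outcome; homogeneity makes
  it the response probability of stratum u in every trial.\<close>

definition potential_response :: "unit_t pmf \<Rightarrow> bool \<Rightarrow> bool \<times> bool \<Rightarrow> real" where
  "potential_response p z u = cPr p (uYz z) (\<lambda>x. uU x = u)"

lemma homogeneity_Pr_trial:
  assumes A3: "homogeneity p" and pU: "Pr p (\<lambda>x. uU x = u) > 0"
  shows "Pr p (\<lambda>x. uYz z x \<and> uU x = u \<and> uR x = r)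
      = potential_response p z u * Pr p (\<lambda>x. uU x = u \<and> uR x = r)"
proof -
  have "Pr p (\<lambda>x. uR x = r \<and> uYz z x = True \<and> uU x = u) * Pr p (\<lambda>x. uU x = u)
      = Pr p (\<lambda>x. uR x = r \<and> uU x = u) * Pr p (\<lambda>x. uYz z x = True \<and> uU x = u)"
    using A3 unfolding homogeneity_def by blast
  with pU show ?thesis
    unfolding potential_response_def cPr_def by (simp add: field_simps conj_ac)
qed

lemma Pr_obsY_stratum_trial:
  assumes A1: "randomization p" and A3: "homogeneity p"
    and pR: "Pr p (\<lambda>x. uR x = r) > 0" and pU: "Pr p (\<lambda>x. uU x = u) > 0"
  shows "Pr p (\<lambda>x. obsY x \<and> uZ x = z \<and> uU x = u \<and> uR x = r)
      = potential_response p z u * Pr p (\<lambda>x. uZ x = z \<and> uU x = u \<and> uR x = r)"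
proof -
  have "Pr p (\<lambda>x. obsY x \<and> uZ x = z \<and> uU x = u \<and> uR x = r) * Pr p (\<lambda>x. uR x = r)
      = Pr p (\<lambda>x. uZ x = z \<and> uR x = r) * Pr p (\<lambda>x. uYz z x \<and> uU x = u \<and> uR x = r)"
    by (rule randomization_Pr_mult[OF A1, where f = "\<lambda>(s1, s0, y1, y0). (if z then y1 else y0) \<and> (s1, s0) = u"])
      (auto simp: obsY_def uYz_def uU_def)
  moreover have "Pr p (\<lambda>x. uZ x = z \<and> uU x = u \<and> uR x = r) * Pr p (\<lambda>x. uR x = r)
      = Pr p (\<lambda>x. uZ x = z \<and> uR x = r) * Pr p (\<lambda>x. uU x = u \<and> uR x = r)"
    by (rule randomization_Pr_mult[OF A1, where f = "\<lambda>(s1, s0, y1, y0). (s1, s0) = u"])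
      (auto simp: uU_def)
  ultimately have "Pr p (\<lambda>x. obsY x \<and> uZ x = z \<and> uU x = u \<and> uR x = r) * Pr p (\<lambda>x. uR x = r)
      = potential_response p z u * Pr p (\<lambda>x. uZ x = z \<and> uU x = u \<and> uR x = r) * Pr p (\<lambda>x. uR x = r)"
    unfolding homogeneity_Pr_trial[OF A3 pU] by (simp only: ac_simps)
  with pR show ?thesis by simp
qed

lemma delta_eq_potential_response:
  assumes trials: "AE x in measure_pmf p. uR x \<in> {1, 2}"
    and A1: "randomization p" and A3: "homogeneity p"
    and posR: "\<And>r. r \<in> {1, 2} \<Longrightarrow> Pr p (\<lambda>x. uR x = r) > 0"
    and pZU: "Pr p (\<lambda>x. uZ x = z \<and> uU x = u) > 0"
  shows "delta p z u = potential_response p z u"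
proof -
  have pU: "Pr p (\<lambda>x. uU x = u) > 0"
    using pZU Pr_conj_le[of p "\<lambda>x. uZ x = z" "\<lambda>x. uU x = u"] by linarith
  have "Pr p (\<lambda>x. obsY x \<and> uZ x = z \<and> uU x = u)
      = Pr p (\<lambda>x. obsY x \<and> uZ x = z \<and> uU x = u \<and> uR x = 1)
        + Pr p (\<lambda>x. obsY x \<and> uZ x = z \<and> uU x = u \<and> uR x = 2)"
    using Pr_split_trials[OF trials, of "\<lambda>x. obsY x \<and> uZ x = z \<and> uU x = u"] by simp
  also have "\<dots> = potential_response p z u * (Pr p (\<lambda>x. uZ x = z \<and> uU x = u \<and> uR x = 1)
        + Pr p (\<lambda>x. uZ x = z \<and> uU x = u \<and> uR x = 2))"
    using Pr_obsY_stratum_trial[OF A1 A3 posR pU, of 1] Pr_obsY_stratum_trial[OF A1 A3 posR pU, of 2]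
    by (simp add: distrib_left)
  also have "\<dots> = potential_response p z u * Pr p (\<lambda>x. uZ x = z \<and> uU x = u)"
    using Pr_split_trials[OF trials, of "\<lambda>x. uZ x = z \<and> uU x = u"] by simp
  finally show ?thesis
    using pZU unfolding delta_def cPr_def by (simp add: conj_commute)
qed

text \<open>In arm z the observed event S = z is the union of the strata (1,z) and (z,0).\<close>

lemma omega_stratum_mixture:
  assumes A1: "randomization p" and A3: "homogeneity p"
    and pR: "Pr p (\<lambda>x. uR x = r) > 0" and pZ: "Pr p (\<lambda>x. uZ x = z \<and> uR x = r) > 0"
    and pU1: "Pr p (\<lambda>x. uU x = (True, z)) > 0" and pU2: "Pr p (\<lambda>x. uU x = (z, False)) > 0"
  shows "omega p True z z r = potential_response p z (True, z) * piU p (True, z) r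
      + potential_response p z (z, False) * piU p (z, False) r"
proof -
  have "omega p True z z r = Pr p (\<lambda>x. uYz z x \<and> uSz z x = z \<and> uR x = r) / Pr p (\<lambda>x. uR x = r)"
    unfolding omega_def cPr_def
    by (rule randomization_cond_arm[OF A1 pZ pR,
          where f = "\<lambda>(s1, s0, y1, y0). (if z then y1 else y0) \<and> (if z then s1 else s0) = z"])
      (auto simp: obsY_def obsS_def uYz_def uSz_def)
  also have "Pr p (\<lambda>x. uYz z x \<and> uSz z x = z \<and> uR x = r)
      = Pr p (\<lambda>x. uYz z x \<and> uU x = (True, z) \<and> uR x = r)
        + Pr p (\<lambda>x. uYz z x \<and> uU x = (z, False) \<and> uR x = r)"
  proof -
    have "Pr p (\<lambda>x. uYz z x \<and> uSz z x = z \<and> uR x = r)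
        = Pr p (\<lambda>x. (uYz z x \<and> uSz z x = z \<and> uR x = r) \<and> uSz (\<not> z) x)
          + Pr p (\<lambda>x. (uYz z x \<and> uSz z x = z \<and> uR x = r) \<and> \<not> uSz (\<not> z) x)"
      by (rule Pr_split_conj)
    also have "\<dots> = Pr p (\<lambda>x. uYz z x \<and> uU x = (True, z) \<and> uR x = r)
        + Pr p (\<lambda>x. uYz z x \<and> uU x = (z, False) \<and> uR x = r)"
      by (intro arg_cong2[where f = "(+)"] Pr_cong; cases z) (auto simp: uSz_def uU_def)
    finally show ?thesis .
  qed
  finally show ?thesis
    unfolding homogeneity_Pr_trial[OF A3 pU1] homogeneity_Pr_trial[OF A3 pU2] piU_def cPr_def
    by (simp add: add_divide_distrib)
qed

lemma cramer_2x2: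
  fixes a b x1 x2 y1 y2 w1 w2 :: real
  assumes "w1 = a * x1 + b * y1" "w2 = a * x2 + b * y2" "x1 * y2 - x2 * y1 \<noteq> 0"
  shows "a = (w1 * y2 - w2 * y1) / (x1 * y2 - x2 * y1)"
    and "b = (w2 * x1 - w1 * x2) / (x1 * y2 - x2 * y1)"
  using assms by (simp_all add: field_simps)

lemma delta_identified:
  assumes trials: "AE x in measure_pmf p. uR x \<in> {1, 2}"
    and A1: "randomization p" and A3: "homogeneity p"
    and posR: "\<And>r. r \<in> {1, 2} \<Longrightarrow> Pr p (\<lambda>x. uR x = r) > 0"
    and posZ: "\<And>r. r \<in> {1, 2} \<Longrightarrow> Pr p (\<lambda>x. uZ x = z \<and> uR x = r) > 0"
    and det: "piU p (True, z) 1 * piU p (z, False) 2 - piU p (True, z) 2 * piU p (z, False) 1 \<noteq> 0"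
    and pos1: "Pr p (\<lambda>x. uZ x = z \<and> uU x = (True, z)) > 0"
    and pos2: "Pr p (\<lambda>x. uZ x = z \<and> uU x = (z, False)) > 0"
  shows "delta p z (True, z) =
      (omega p True z z 1 * piU p (z, False) 2 - omega p True z z 2 * piU p (z, False) 1)
      / (piU p (True, z) 1 * piU p (z, False) 2 - piU p (True, z) 2 * piU p (z, False) 1)"
      (is "_ = ?a")
    and "delta p z (z, False) =
      (omega p True z z 2 * piU p (True, z) 1 - omega p True z z 1 * piU p (True, z) 2)
      / (piU p (True, z) 1 * piU p (z, False) 2 - piU p (True, z) 2 * piU p (z, False) 1)"
      (is "_ = ?b")
proof -
  have pU: "Pr p (\<lambda>x. uU x = u) > 0" if "Pr p (\<lambda>x. uZ x = z \<and> uU x = u) > 0" for u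
    using that Pr_conj_le[of p "\<lambda>x. uZ x = z" "\<lambda>x. uU x = u"] by linarith
  have mixture: "omega p True z z r = potential_response p z (True, z) * piU p (True, z) r
      + potential_response p z (z, False) * piU p (z, False) r" if "r \<in> {1, 2}" for r
    using omega_stratum_mixture[OF A1 A3 posR posZ pU pU] pos1 pos2 that by blast
  have "delta p z u = potential_response p z u" if "Pr p (\<lambda>x. uZ x = z \<and> uU x = u) > 0" for u
    using delta_eq_potential_response[OF trials A1 A3] posR that by blast
  then show "delta p z (True, z) = ?a" "delta p z (z, False) = ?b"
    using cramer_2x2[OF mixture[of 1] mixture[of 2] det] pos1 pos2 by simp_all
qed

theorem mainTheorem3:
  fixes p :: "unit_t pmf"
  defines "ss \<equiv> (True, True)" and "ssb \<equiv> (True, False)" and "sbsb \<equiv> (False, False)"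
  assumes trials: "AE x in measure_pmf p. uR x \<in> {1, 2}"
    and A1: "randomization p"
    and A2: "monotonicity p"
    and A3: "homogeneity p"
    and posR: "\<And>r. r \<in> {1, 2} \<Longrightarrow> Pr p (\<lambda>x. uR x = r) > 0"
    and posZ: "\<And>r. r \<in> {1, 2} \<Longrightarrow> 0 < cPr p uZ (\<lambda>x. uR x = r) \<and> cPr p uZ (\<lambda>x. uR x = r) < 1"
  shows "(\<forall>r \<in> {1, 2}.
            piU p sbsb r = cPr p (\<lambda>x. \<not> obsS x) (\<lambda>x. uZ x \<and> uR x = r) \<and>
            piU p ss r = cPr p obsS (\<lambda>x. \<not> uZ x \<and> uR x = r) \<and>
            piU p ssb r = 1 - piU p ss r - piU p sbsb r)
       \<and> ((piU p ss 1 * piU p ssb 2 - piU p ss 2 * piU p ssb 1 \<noteq> 0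
            \<and> Pr p (\<lambda>x. uZ x \<and> uU x = ss) > 0 \<and> Pr p (\<lambda>x. uZ x \<and> uU x = ssb) > 0) \<longrightarrow>
            delta p True ss =
              (omega p True True True 1 * piU p ssb 2 - omega p True True True 2 * piU p ssb 1)
              / (piU p ss 1 * piU p ssb 2 - piU p ss 2 * piU p ssb 1) \<and>
            delta p True ssb =
              (omega p True True True 2 * piU p ss 1 - omega p True True True 1 * piU p ss 2)
              / (piU p ss 1 * piU p ssb 2 - piU p ss 2 * piU p ssb 1))
       \<and> ((piU p ssb 1 * piU p sbsb 2 - piU p ssb 2 * piU p sbsb 1 \<noteq> 0
            \<and> Pr p (\<lambda>x. \<not> uZ x \<and> uU x = ssb) > 0 \<and> Pr p (\<lambda>x. \<not> uZ x \<and> uU x = sbsb) > 0) \<longrightarrow>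
            delta p False ssb =
              (omega p True False False 1 * piU p sbsb 2 - omega p True False False 2 * piU p sbsb 1)
              / (piU p ssb 1 * piU p sbsb 2 - piU p ssb 2 * piU p sbsb 1) \<and>
            delta p False sbsb =
              (omega p True False False 2 * piU p ssb 1 - omega p True False False 1 * piU p ssb 2)
              / (piU p ssb 1 * piU p sbsb 2 - piU p ssb 2 * piU p sbsb 1))"
proof -
  have arm: "Pr p (\<lambda>x. uZ x = z \<and> uR x = r) > 0" if "r \<in> {1, 2}" for z r
    using treatment_arm_pos posR posZ that by blast
  have strata: "piU p sbsb r = cPr p (\<lambda>x. \<not> obsS x) (\<lambda>x. uZ x \<and> uR x = r) \<and>
      piU p ss r = cPr p obsS (\<lambda>x. \<not> uZ x \<and> uR x = r) \<and>
      piU p ssb r = 1 - piU p ss r - piU p sbsb r" if r: "r \<in> {1, 2}" for r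
    using piU_never_eq_treated_nonresponse[OF A1 A2 posR[OF r] arm[OF r]]
      piU_always_eq_control_response[OF A1 A2 posR[OF r] arm[OF r]]
      piU_strata_sum[OF A2 posR[OF r]]
    unfolding ss_def ssb_def sbsb_def by linarith
  show ?thesis
    using strata delta_identified[OF trials A1 A3 posR arm, of True]
      delta_identified[OF trials A1 A3 posR arm, of False]
    unfolding ss_def ssb_def sbsb_def by simp
qed

end
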